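(* Let $G$ be a graph and let $p\geq 2$ be an integer. Then $\mathrm{id}^{\leq p}(G) \leq \left\lceil\frac{|E(G)|}{\lfloor p/2\rfloor}\right\rceil + \frac{1}{2}p^2$.
   Context: All graphs are finite and simple. For an oriented graph $D$ and a set $X\subseteq V(D)$, the inversion of $X$ reverses the orientation of every arc with both endvertices in $X$. For an integer $p\ge 2$, a $(\leq p)$-inversion is the inversion of a set of at most $p$ vertices. For a graph $G$, $\mathrm{id}^{\leq p}(G)$ (the $(\leq p)$-inversion diameter) is the maximum, over all ordered pairs $(\vec G_1,\vec G_2)$ of orientations of $G$ (on the same labelled vertex set), of the minimum number of $(\leq p)$-inversions whose successive application transforms $\vec G_1$ into $\vec G_2$; equivalently it is the diameter of the graph whose vertices are the orientations of $G$, two being adjacent iff one $(\leq p)$-inversion transforms one into the other. *)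

theory Defs
  imports Complex_Main
begin

definition simple_graph :: "'a set \<Rightarrow> 'a set set \<Rightarrow> bool" where
  "simple_graph V E \<longleftrightarrow> finite V \<and>
     (\<forall>e\<in>E. \<exists>u v. u \<noteq> v \<and> u \<in> V \<and> v \<in> V \<and> e = {u, v})"

definition orientation :: "'a set \<Rightarrow> 'a set set \<Rightarrow> ('a \<times> 'a) set \<Rightarrow> bool" where
  "orientation V E A \<longleftrightarrow>
     (\<forall>u v. (u, v) \<in> A \<longrightarrow> {u, v} \<in> E) \<and>
     (\<forall>u v. {u, v} \<in> E \<longrightarrow> ((u, v) \<in> A \<longleftrightarrow> (v, u) \<notin> A))"

definition invert :: "'a set \<Rightarrow> ('a \<times> 'a) set \<Rightarrow> ('a \<times> 'a) set" where
  "invert X A = {(u, v). ((u, v) \<in> A \<and> \<not> (u \<in> X \<and> v \<in> X)) \<or>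
                         ((v, u) \<in> A \<and> u \<in> X \<and> v \<in> X)}"

definition apply_inversions :: "'a set list \<Rightarrow> ('a \<times> 'a) set \<Rightarrow> ('a \<times> 'a) set" where
  "apply_inversions Xs A = foldl (\<lambda>B X. invert X B) A Xs"

definition inv_dist :: "'a set \<Rightarrow> nat \<Rightarrow> ('a \<times> 'a) set \<Rightarrow> ('a \<times> 'a) set \<Rightarrow> nat" where
  "inv_dist V p A1 A2 = Inf {length Xs | Xs.
      (\<forall>X\<in>set Xs. X \<subseteq> V \<and> card X \<le> p) \<and> apply_inversions Xs A1 = A2}"

definition inv_diam :: "'a set \<Rightarrow> 'a set set \<Rightarrow> nat \<Rightarrow> nat" where
  "inv_diam V E p = Sup {inv_dist V p A1 A2 | A1 A2.
      orientation V E A1 \<and> orientation V E A2}"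

end

(* Inverting X reverses exactly the edges inside X, so a list of inversions turns A1 into A2
   iff every edge lies in an odd number of the inverted sets precisely when A1 and A2 disagree
   on it. Hence, with k = p div 2, it suffices to find for every F \<subseteq> E some m sets of at most p
   vertices covering each edge of F an odd and every other edge an even number of times, with
   k m \<le> |E| + 2 k (k - 1)\<^sup>2. This goes by induction on |E|.

   If a vertex v has degree d \<ge> k, invert v together with its F-neighbours, p - 1 of them at a
   time: at most d / k inversions settle all edges at v, and G - v is handled recursively, with F
   corrected on the edges between neighbours of v that these inversions flipped as well.

   If all degrees are below k, partition F greedily into parts of at most k edges such that every
   edge of G spanned by the vertices of a part belongs to it; inverting the vertex set of a part
   (at most 2k \<le> p vertices) then flips exactly that part. An edge e opens a new part only if
   every unfinished part contains an edge through a neighbour of an endpoint of e. There are at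
   most 2 (k - 1)\<^sup>2 such edges, e among them, and the parts are disjoint, so at most
   2 (k - 1)\<^sup>2 parts are unfinished at any time. *)

theory Submission
  imports Defs "HOL-Library.Disjoint_Sets"
begin

section \<open>Inversions act on edges by parity\<close>

definition inversion_count :: "'a set list \<Rightarrow> 'a set \<Rightarrow> nat" where
  "inversion_count Xs e = length (filter (\<lambda>X. e \<subseteq> X) Xs)"

lemma inversion_count_append [simp]:
  "inversion_count (Xs @ Ys) e = inversion_count Xs e + inversion_count Ys e"
  by (simp add: inversion_count_def)

lemma mem_apply_inversions_iff:
  "(u, v) \<in> apply_inversions Xs A \<longleftrightarrow>
     (if even (inversion_count Xs {u, v}) then (u, v) \<in> A else (v, u) \<in> A)"
proof (induction Xs arbitrary: A)
  case Nil
  show ?case by (simp add: apply_inversions_def inversion_count_def)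
next
  case (Cons X Xs)
  have "apply_inversions (X # Xs) A = apply_inversions Xs (invert X A)"
    by (simp add: apply_inversions_def)
  moreover have "(a, b) \<in> invert X A \<longleftrightarrow>
      (if a \<in> X \<and> b \<in> X then (b, a) \<in> A else (a, b) \<in> A)" for a b
    by (auto simp: invert_def)
  ultimately show ?case
    using Cons.IH[of "invert X A"] by (simp add: inversion_count_def)
qed

definition disagreement :: "('a \<times> 'a) set \<Rightarrow> ('a \<times> 'a) set \<Rightarrow> 'a set set" where
  "disagreement A1 A2 = {{u, v} | u v. (u, v) \<in> A1 \<and> (u, v) \<notin> A2}"

lemma disagreement_subset:
  "orientation V E A1 \<Longrightarrow> disagreement A1 A2 \<subseteq> E"
  unfolding orientation_def disagreement_def by blast

lemma apply_inversions_eq_if_parity: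
  assumes A1: "orientation V E A1" and A2: "orientation V E A2"
    and parity: "\<forall>e\<in>E. odd (inversion_count Xs e) \<longleftrightarrow> e \<in> disagreement A1 A2"
  shows "apply_inversions Xs A1 = A2"
proof (rule set_eqI)
  fix x :: "'a \<times> 'a"
  obtain a b where x: "x = (a, b)" by fastforce
  have "(a, b) \<in> apply_inversions Xs A1 \<longleftrightarrow> (a, b) \<in> A2"
  proof (cases "{a, b} \<in> E")
    case True
    have flip1: "(b, a) \<in> A1 \<longleftrightarrow> (a, b) \<notin> A1" and flip2: "(b, a) \<in> A2 \<longleftrightarrow> (a, b) \<notin> A2"
      using A1 A2 True unfolding orientation_def by metis+
    have "{a, b} \<in> disagreement A1 A2 \<longleftrightarrow>
        (a, b) \<in> A1 \<and> (a, b) \<notin> A2 \<or> (b, a) \<in> A1 \<and> (b, a) \<notin> A2"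
      by (auto simp: disagreement_def doubleton_eq_iff)
    then have "odd (inversion_count Xs {a, b}) \<longleftrightarrow> ((a, b) \<in> A1 \<longleftrightarrow> (a, b) \<notin> A2)"
      using parity True flip1 flip2 by blast
    then show ?thesis
      by (simp add: mem_apply_inversions_iff flip1) blast
  next
    case False
    then have "{b, a} \<notin> E" by (simp add: insert_commute)
    then have "(a, b) \<notin> A1" "(b, a) \<notin> A1" "(a, b) \<notin> A2"
      using False A1 A2 unfolding orientation_def by blast+
    then show ?thesis
      by (simp add: mem_apply_inversions_iff)
  qed
  then show "x \<in> apply_inversions Xs A1 \<longleftrightarrow> x \<in> A2" using x by simp
qed

lemma inv_dist_le_length:
  assumes "\<forall>X\<in>set Xs. X \<subseteq> V \<and> card X \<le> p" and "apply_inversions Xs A1 = A2"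
  shows "inv_dist V p A1 A2 \<le> length Xs"
  unfolding inv_dist_def by (rule cInf_lower) (use assms in auto)

lemma inv_diam_le:
  assumes "\<And>A1 A2. orientation V E A1 \<Longrightarrow> orientation V E A2 \<Longrightarrow> inv_dist V p A1 A2 \<le> b"
  shows "inv_diam V E p \<le> b"
proof (cases "\<exists>A1 A2. orientation V E A1 \<and> orientation V E A2")
  case True
  then show ?thesis
    unfolding inv_diam_def using assms by (intro cSup_least) auto
qed (simp add: inv_diam_def)


lemma simple_graph_edgeE:
  assumes "simple_graph V E" "e \<in> E"
  obtains u v where "u \<noteq> v" "u \<in> V" "v \<in> V" "e = {u, v}"
  using assms unfolding simple_graph_def by blast

lemma simple_graph_edge_subset: "simple_graph V E \<Longrightarrow> e \<in> E \<Longrightarrow> e \<subseteq> V"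
  by (erule simple_graph_edgeE) auto

lemma simple_graph_card_edge: "simple_graph V E \<Longrightarrow> e \<in> E \<Longrightarrow> card e = 2"
  by (erule simple_graph_edgeE) auto

lemma simple_graph_finite_edges:
  assumes "simple_graph V E"
  shows "finite E"
proof (rule finite_subset)
  show "E \<subseteq> Pow V"
    using simple_graph_edge_subset[OF assms] by blast
  show "finite (Pow V)"
    using assms by (simp add: simple_graph_def)
qed

lemma simple_graph_subset_edge_eq:
  assumes "simple_graph V E" "e \<in> E" "e' \<in> E" "e' \<subseteq> e"
  shows "e' = e"
  using assms by (metis card_subset_eq card.infinite simple_graph_card_edge zero_neq_numeral)

lemma simple_graph_delete_vertex:
  assumes "simple_graph V E"
  shows "simple_graph (V - {v}) {e \<in> E. v \<notin> e}"
  using assms unfolding simple_graph_def by blast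

definition degree :: "'a set set \<Rightarrow> 'a \<Rightarrow> nat" where
  "degree E x = card {e \<in> E. x \<in> e}"

definition neighbours :: "'a set set \<Rightarrow> 'a \<Rightarrow> 'a set" where
  "neighbours E x = {y. {x, y} \<in> E}"

lemma card_neighbours_le_degree:
  assumes "simple_graph V E" and "F \<subseteq> E"
  shows "card (neighbours F x) \<le> degree E x"
  unfolding neighbours_def degree_def
proof (rule card_inj_on_le)
  show "inj_on (\<lambda>y. {x, y}) {y. {x, y} \<in> F}"
    by (auto simp: inj_on_def doubleton_eq_iff)
  show "(\<lambda>y. {x, y}) ` {y. {x, y} \<in> F} \<subseteq> {e \<in> E. x \<in> e}"
    using \<open>F \<subseteq> E\<close> by auto
  show "finite {e \<in> E. x \<in> e}"
    using simple_graph_finite_edges[OF assms(1)] by simp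
qed

lemma degree_pos_imp_vertex:
  assumes "simple_graph V E" and "0 < degree E v"
  shows "v \<in> V"
proof -
  have "{e \<in> E. v \<in> e} \<noteq> {}"
    using \<open>0 < degree E v\<close> unfolding degree_def by (metis card.empty less_irrefl)
  then show ?thesis
    using simple_graph_edge_subset[OF assms(1)] by blast
qed

lemma card_edges_eq_degree_add:
  assumes "finite E"
  shows "card E = card {e \<in> E. v \<notin> e} + degree E v"
proof -
  have "E = {e \<in> E. v \<notin> e} \<union> {e \<in> E. v \<in> e}"
    by blast
  then show ?thesis
    unfolding degree_def using assms by (metis (no_types, lifting) card_Un_disjoint disjoint_iff finite_Un mem_Collect_eq)
qed

definition edges_near :: "'a set set \<Rightarrow> 'a set \<Rightarrow> 'a set set" where
  "edges_near E e = {f \<in> E. \<exists>x\<in>e. \<exists>y\<in>f. {x, y} \<in> E}"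

lemma card_edges_near_le:
  assumes G: "simple_graph V E" and "e \<in> E" and deg: "\<And>x. degree E x \<le> \<Delta>"
  shows "card (edges_near E e) \<le> 2 * \<Delta>\<^sup>2"
proof -
  define W where "W = (\<Union>x\<in>e. neighbours E x)"
  have fin_e: "finite e" and card_e: "card e = 2"
    using simple_graph_card_edge[OF G \<open>e \<in> E\<close>] by (auto intro: card_ge_0_finite)
  have "card W \<le> (\<Sum>x\<in>e. card (neighbours E x))"
    unfolding W_def using fin_e by (rule card_UN_le)
  also have "\<dots> \<le> (\<Sum>x\<in>e. \<Delta>)"
    by (intro sum_mono order.trans[OF card_neighbours_le_degree[OF G subset_refl] deg])
  finally have card_W: "card W \<le> 2 * \<Delta>"
    using card_e by simp
  have fin_W: "finite W"
    unfolding W_def neighbours_def using fin_e simple_graph_edge_subset[OF G] G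
    by (intro finite_UN_I) (auto simp: simple_graph_def intro: finite_subset)
  have "edges_near E e \<subseteq> (\<Union>y\<in>W. {f \<in> E. y \<in> f})"
    unfolding edges_near_def W_def neighbours_def by blast
  then have "card (edges_near E e) \<le> card (\<Union>y\<in>W. {f \<in> E. y \<in> f})"
    using fin_W simple_graph_finite_edges[OF G] by (intro card_mono) auto
  also have "\<dots> \<le> (\<Sum>y\<in>W. degree E y)"
    unfolding degree_def using fin_W by (rule card_UN_le)
  also have "\<dots> \<le> card W * \<Delta>"
    using sum_mono[of W "degree E" "\<lambda>_. \<Delta>"] deg by simp
  also have "\<dots> \<le> 2 * \<Delta> * \<Delta>"
    using card_W by (rule mult_le_mono1)
  finally show ?thesis
    by (simp add: power2_eq_square)
qed

section \<open>Induced partitions of graphs of small maximum degree\<close>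

definition induced_in :: "'a set set \<Rightarrow> 'a set set \<Rightarrow> bool" where
  "induced_in E P \<longleftrightarrow> (\<forall>e\<in>E. e \<subseteq> \<Union>P \<longrightarrow> e \<in> P)"

lemma induced_in_singleton: "simple_graph V E \<Longrightarrow> e \<in> E \<Longrightarrow> induced_in E {e}"
  unfolding induced_in_def using simple_graph_subset_edge_eq by auto

lemma edge_in_edges_near: "simple_graph V E \<Longrightarrow> e \<in> E \<Longrightarrow> e \<in> edges_near E e"
  unfolding edges_near_def by (erule simple_graph_edgeE) auto

lemma blocking_part_meets_edges_near:
  assumes G: "simple_graph V E" and "e \<in> E" "e \<notin> P" "P \<subseteq> E"
    and "induced_in E P" "\<not> induced_in E (insert e P)"
  shows "\<exists>f\<in>P. f \<in> edges_near E e"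
proof -
  obtain e' where "e' \<in> E" "e' \<subseteq> e \<union> \<Union>P" "e' \<notin> insert e P"
    using assms(6) unfolding induced_in_def by auto
  moreover have "\<not> e' \<subseteq> \<Union>P"
    using assms(5) \<open>e' \<in> E\<close> \<open>e' \<notin> insert e P\<close> unfolding induced_in_def by blast
  moreover have "\<not> e' \<subseteq> e"
    using simple_graph_subset_edge_eq[OF G \<open>e \<in> E\<close> \<open>e' \<in> E\<close>] \<open>e' \<notin> insert e P\<close> by blast
  ultimately obtain x y where "x \<in> e'" "x \<in> e" "y \<in> e'" "y \<in> \<Union>P" "y \<notin> e"
    by blast
  moreover obtain u v where "e' = {u, v}"
    using simple_graph_edgeE[OF G \<open>e' \<in> E\<close>] by metis
  ultimately have "x \<in> e" "y \<in> \<Union>P" "{x, y} \<in> E"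
    using \<open>e' \<in> E\<close> by (auto simp: insert_commute)
  then show ?thesis
    using \<open>P \<subseteq> E\<close> unfolding edges_near_def by blast
qed

lemma card_blocking_parts_less:
  assumes G: "simple_graph V E" and "e \<in> E" and PP: "disjoint PP" "e \<notin> \<Union>PP" "\<Union>PP \<subseteq> E"
    and B: "B \<subseteq> PP" "\<forall>P\<in>B. induced_in E P \<and> \<not> induced_in E (insert e P)"
  shows "card B < card (edges_near E e)"
proof -
  obtain f where f: "\<forall>P\<in>B. f P \<in> P \<and> f P \<in> edges_near E e"
    using blocking_part_meets_edges_near[OF G \<open>e \<in> E\<close>] B PP by (metis Sup_le_iff UnionI subsetD)
  have "inj_on f B"
    using f B PP(1) by (intro inj_onI) (metis IntI disjointD empty_iff subsetD)
  moreover have "f ` B \<subseteq> edges_near E e - {e}"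
    using f B PP(2) by blast
  moreover have fin: "finite (edges_near E e)"
    using simple_graph_finite_edges[OF G] unfolding edges_near_def by simp
  ultimately have "card B \<le> card (edges_near E e - {e})"
    by (intro card_inj_on_le) auto
  also have "\<dots> < card (edges_near E e)"
    using fin edge_in_edges_near[OF G \<open>e \<in> E\<close>] by (rule card_Diff1_less)
  finally show ?thesis .
qed

definition good_partition :: "'a set set \<Rightarrow> nat \<Rightarrow> 'a set set \<Rightarrow> 'a set set set \<Rightarrow> bool" where
  "good_partition E k F PP \<longleftrightarrow> partition_on F PP \<and> (\<forall>P\<in>PP. card P \<le> k \<and> induced_in E P) \<and>
     card {P\<in>PP. card P < k} \<le> 2 * (k - 1)\<^sup>2"

lemma partition_on_insert_into_part:
  assumes "partition_on F PP" "P \<in> PP" "e \<notin> F"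
  shows "partition_on (insert e F) (insert (insert e P) (PP - {P}))"
  using assms unfolding partition_on_def disjoint_def by blast

lemma good_partition_extend_part:
  assumes PP: "good_partition E k F PP" and "finite F" "e \<notin> F"
    and P: "P \<in> PP" "card P < k" "induced_in E (insert e P)"
  shows "good_partition E k (insert e F) (insert (insert e P) (PP - {P}))"
proof -
  define small where "small = {P\<in>PP. card P < k}"
  have part: "partition_on F PP"
    using PP by (simp add: good_partition_def)
  then have fin_small: "finite small"
    using finite_elements[OF \<open>finite F\<close>] unfolding small_def by simp
  have "finite P"
    using P(1) part \<open>finite F\<close> by (metis Union_upper finite_subset partition_onD1)
  then have "card (insert e P) \<le> k"
    using P(2) by (simp add: card_insert_if)
  have "card {Q \<in> insert (insert e P) (PP - {P}). card Q < k} \<le> card (insert (insert e P) (small - {P}))"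
    using fin_small by (intro card_mono) (auto simp: small_def)
  also have "\<dots> \<le> Suc (card (small - {P}))"
    using fin_small by (simp add: card_insert_if)
  also have "\<dots> = card small"
    using P by (intro card_Suc_Diff1[OF fin_small]) (simp add: small_def)
  finally show ?thesis
    using PP P(3) \<open>card (insert e P) \<le> k\<close> partition_on_insert_into_part[OF part P(1) \<open>e \<notin> F\<close>]
    unfolding good_partition_def small_def by auto
qed

lemma good_partition_new_part:
  assumes G: "simple_graph V E" and deg: "\<forall>x. degree E x < k"
    and PP: "good_partition E k F PP" and "F \<subseteq> E" "e \<in> E" "e \<notin> F"
    and blocked: "\<forall>P\<in>PP. card P < k \<longrightarrow> \<not> induced_in E (insert e P)"
  shows "good_partition E k (insert e F) (insert {e} PP)"
proof -
  define small where "small = {P\<in>PP. card P < k}"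
  have part: "partition_on F PP" and parts: "\<forall>P\<in>PP. card P \<le> k \<and> induced_in E P"
    using PP by (auto simp: good_partition_def)
  have "finite F"
    using \<open>F \<subseteq> E\<close> simple_graph_finite_edges[OF G] by (rule finite_subset)
  then have fin_small: "finite small"
    using finite_elements[OF _ part] unfolding small_def by simp
  have "0 < k"
    using deg by (metis gr_zeroI less_nat_zero_code)
  have "card small < card (edges_near E e)"
    using part blocked parts \<open>F \<subseteq> E\<close> \<open>e \<notin> F\<close>
    by (intro card_blocking_parts_less[OF G \<open>e \<in> E\<close>])
      (auto simp: small_def dest: partition_onD1 partition_onD2)
  also have "\<dots> \<le> 2 * (k - 1)\<^sup>2"
    using deg by (intro card_edges_near_le[OF G \<open>e \<in> E\<close>]) (metis Suc_pred' gr_zeroI less_Suc_eq_le not_less0)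
  finally have card_small_less: "card small < 2 * (k - 1)\<^sup>2" .
  have "card {Q \<in> insert {e} PP. card Q < k} \<le> card (insert {e} small)"
    using fin_small by (intro card_mono) (auto simp: small_def)
  also have "\<dots> \<le> Suc (card small)"
    using fin_small by (simp add: card_insert_if)
  finally have "card {Q \<in> insert {e} PP. card Q < k} \<le> 2 * (k - 1)\<^sup>2"
    using card_small_less by linarith
  moreover have "partition_on (insert e F) (insert {e} PP)"
    using part \<open>e \<notin> F\<close> by (subst partition_on_insert) (auto simp: disjnt_def dest: partition_onD1)
  ultimately show ?thesis
    using parts induced_in_singleton[OF G \<open>e \<in> E\<close>] \<open>0 < k\<close> unfolding good_partition_def by auto
qed

lemma good_partition_exists:
  assumes G: "simple_graph V E" and deg: "\<forall>x. degree E x < k" and "F \<subseteq> E"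
  shows "\<exists>PP. good_partition E k F PP"
proof -
  have "finite F"
    using \<open>F \<subseteq> E\<close> simple_graph_finite_edges[OF G] by (rule finite_subset)
  then show ?thesis
    using \<open>F \<subseteq> E\<close>
  proof (induction F rule: finite_subset_induct')
    case empty
    show ?case
      by (rule exI[of _ "{}"]) (simp add: good_partition_def partition_on_empty)
  next
    case (insert e F)
    then obtain PP where PP: "good_partition E k F PP"
      by blast
    show ?case
    proof (cases "\<exists>P\<in>PP. card P < k \<and> induced_in E (insert e P)")
      case True
      then show ?thesis
        using good_partition_extend_part[OF PP \<open>finite F\<close> \<open>e \<notin> F\<close>] by blast
    next
      case False
      then show ?thesis
        using good_partition_new_part[OF G deg PP \<open>F \<subseteq> E\<close> \<open>e \<in> E\<close> \<open>e \<notin> F\<close>] by blast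
    qed
  qed
qed

lemma inversion_count_Union_parts:
  assumes part: "partition_on F PP" and induced: "\<forall>P\<in>PP. induced_in E P"
    and xs: "set xs = PP" "distinct xs" and "e \<in> E"
  shows "inversion_count (map Union xs) e = (if e \<in> F then 1 else 0)"
proof -
  have "inversion_count (map Union xs) e = card {P\<in>PP. e \<subseteq> \<Union>P}"
    unfolding inversion_count_def using xs by (simp add: filter_map o_def distinct_length_filter Int_def conj_commute)
  also have "{P\<in>PP. e \<subseteq> \<Union>P} = {P\<in>PP. e \<in> P}"
    using induced \<open>e \<in> E\<close> unfolding induced_in_def by blast
  also have "card \<dots> = (if e \<in> F then 1 else 0)"
  proof (cases "e \<in> F")
    case True
    then obtain P where "P \<in> PP" "e \<in> P"
      using partition_onD1[OF part] by blast
    then have "{P\<in>PP. e \<in> P} = {P}"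
      using partition_onD2[OF part] by (auto dest: disjointD)
    then show ?thesis
      using True by simp
  next
    case False
    then have "{P\<in>PP. e \<in> P} = {}"
      using partition_onD1[OF part] by blast
    then show ?thesis
      using False by (simp only: card.empty if_False)
  qed
  finally show ?thesis .
qed

lemma card_Union_edges_le:
  assumes G: "simple_graph V E" and "P \<subseteq> E"
  shows "card (\<Union>P) \<le> 2 * card P"
proof -
  have "card (\<Union>P) \<le> (\<Sum>f\<in>P. card f)"
    by (rule card_Union_le_sum_card)
  also have "\<dots> = (\<Sum>f\<in>P. 2)"
    using \<open>P \<subseteq> E\<close> simple_graph_card_edge[OF G] by (intro sum.cong) auto
  finally show ?thesis
    by simp
qed

lemma card_partition_le:
  assumes part: "partition_on F PP" and "finite F" and parts: "\<forall>P\<in>PP. card P \<le> k"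
  shows "k * card PP \<le> card F + k * card {P\<in>PP. card P < k}"
proof -
  define full where "full = {P\<in>PP. card P = k}"
  define small where "small = {P\<in>PP. card P < k}"
  have fin_PP: "finite PP"
    using finite_elements[OF \<open>finite F\<close> part] .
  have fin_parts: "\<And>P. P \<in> PP \<Longrightarrow> finite P"
    using part \<open>finite F\<close> by (metis Union_upper finite_subset partition_onD1)
  have "PP = full \<union> small"
    unfolding full_def small_def using parts by force
  moreover have "card (full \<union> small) = card full + card small"
    using fin_PP by (intro card_Un_disjoint) (auto simp: full_def small_def)
  ultimately have "card PP = card full + card small"
    by simp
  moreover have "k * card full \<le> card F"
  proof -
    have "k * card full = (\<Sum>P\<in>full. card P)"
      unfolding full_def by simp
    also have "\<dots> \<le> (\<Sum>P\<in>PP. card P)"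
      using fin_PP unfolding full_def by (intro sum_mono2) auto
    also have "\<dots> = card F"
      using card_Union_disjoint[OF partition_onD2[OF part] fin_parts] partition_onD1[OF part] by simp
    finally show ?thesis .
  qed
  ultimately show ?thesis
    unfolding small_def by (simp add: add_mult_distrib2)
qed

lemma low_degree_parity_inversions:
  assumes G: "simple_graph V E" and deg: "\<forall>x. degree E x < k" and "F \<subseteq> E" and "2 * k \<le> p"
  obtains Xs where "\<forall>X\<in>set Xs. X \<subseteq> V \<and> card X \<le> p"
    and "k * length Xs \<le> card F + 2 * k * (k - 1)\<^sup>2"
    and "\<forall>e\<in>E. odd (inversion_count Xs e) \<longleftrightarrow> e \<in> F"
proof -
  obtain PP where part: "partition_on F PP" and parts: "\<forall>P\<in>PP. card P \<le> k \<and> induced_in E P"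
    and card_small: "card {P\<in>PP. card P < k} \<le> 2 * (k - 1)\<^sup>2"
    using good_partition_exists[OF G deg \<open>F \<subseteq> E\<close>] unfolding good_partition_def by blast
  have "finite F"
    using \<open>F \<subseteq> E\<close> simple_graph_finite_edges[OF G] by (rule finite_subset)
  then obtain xs where xs: "set xs = PP" "distinct xs"
    using finite_distinct_list[OF finite_elements[OF _ part]] by blast
  have "\<Union>P \<subseteq> V \<and> card (\<Union>P) \<le> p" if "P \<in> PP" for P
  proof -
    have "P \<subseteq> E"
      using that part \<open>F \<subseteq> E\<close> by (blast dest: partition_onD1)
    then have "card (\<Union>P) \<le> 2 * card P" and "\<Union>P \<subseteq> V"
      using card_Union_edges_le[OF G] simple_graph_edge_subset[OF G] by blast+
    moreover have "card P \<le> k"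
      using parts that by blast
    ultimately show ?thesis
      using \<open>2 * k \<le> p\<close> by linarith
  qed
  then have "\<forall>X\<in>set (map Union xs). X \<subseteq> V \<and> card X \<le> p"
    using xs(1) by auto
  moreover have "\<forall>e\<in>E. odd (inversion_count (map Union xs) e) \<longleftrightarrow> e \<in> F"
    using inversion_count_Union_parts[OF part _ xs, of E] parts by simp
  moreover have "k * length (map Union xs) \<le> card F + 2 * k * (k - 1)\<^sup>2"
  proof -
    have "k * length (map Union xs) \<le> card F + k * card {P\<in>PP. card P < k}"
      using card_partition_le[OF part \<open>finite F\<close>] parts distinct_card[OF xs(2)] xs(1) by simp
    also have "\<dots> \<le> card F + 2 * k * (k - 1)\<^sup>2"
      using mult_le_mono2[OF card_small, of k] by (simp add: ac_simps)
    finally show ?thesis .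
  qed
  ultimately show ?thesis
    using that by blast
qed

section \<open>Stars of vertices of large degree\<close>

lemma split_into_chunks:
  assumes "finite S" and "0 < c"
  shows "\<exists>Ts. (\<forall>T\<in>set Ts. T \<subseteq> S \<and> card T \<le> c) \<and>
    (\<forall>u\<in>S. length (filter (\<lambda>T. u \<in> T) Ts) = 1) \<and> length Ts * c < card S + c"
  using assms(1)
proof (induction "card S" arbitrary: S rule: less_induct)
  case (less S)
  consider "S = {}" | "S \<noteq> {}" "card S \<le> c" | "c < card S"
    by linarith
  then show ?case
  proof cases
    case 1
    then show ?thesis
      using \<open>0 < c\<close> by (intro exI[of _ "[]"]) simp
  next
    case 2
    then show ?thesis
      using less.prems by (intro exI[of _ "[S]"]) (simp add: card_gt_0_iff)
  next
    case 3
    then obtain T where T: "T \<subseteq> S" "card T = c"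
      by (meson less_imp_le_nat obtain_subset_with_card_n)
    then have "card (S - T) = card S - c"
      using less.prems by (metis card_Diff_subset finite_subset)
    then obtain Ts where Ts: "\<forall>T'\<in>set Ts. T' \<subseteq> S - T \<and> card T' \<le> c"
        "\<forall>u\<in>S - T. length (filter (\<lambda>T'. u \<in> T') Ts) = 1" "length Ts * c < card (S - T) + c"
      using less.hyps[of "S - T"] less.prems 3 \<open>0 < c\<close> by auto
    have "\<forall>u\<in>S. length (filter (\<lambda>T'. u \<in> T') (T # Ts)) = 1"
      using Ts(1,2) by (auto simp: filter_empty_conv)
    moreover have "length (T # Ts) * c < card S + c"
      using Ts(3) \<open>card (S - T) = card S - c\<close> 3 by simp
    ultimately show ?thesis
      using Ts(1) T by (intro exI[of _ "T # Ts"]) auto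
  qed
qed

lemma chunk_count_le:
  fixes q c s d k :: nat
  assumes "q * c < s + c" "s \<le> d" "k \<le> d" "2 * k \<le> c + 1"
  shows "q * k \<le> d"
proof (cases q)
  case (Suc r)
  then have "r * c < d"
    using assms(1,2) by simp
  moreover have "r * k + k \<le> r * c + 1 \<or> r = 0"
  proof (cases "r = 0 \<or> k = 0")
    case False
    then have "r * k + k + r \<le> r * (2 * k) + 1"
      by (cases r) (simp_all add: algebra_simps)
    moreover have "r * (2 * k) \<le> r * (c + 1)"
      using assms(4) by (rule mult_le_mono2)
    ultimately show ?thesis
      by (simp add: algebra_simps)
  qed auto
  ultimately show ?thesis
    using Suc assms(3) by auto
qed simp

lemma inversion_count_insert_chunks:
  assumes "u \<noteq> v"
  shows "inversion_count (map (insert v) Ts) {v, u} = length (filter (\<lambda>T. u \<in> T) Ts)"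
  unfolding inversion_count_def using assms by (simp add: filter_map o_def)

lemma star_parity_inversions:
  assumes G: "simple_graph V E" and "F \<subseteq> E" and deg: "k \<le> degree E v" and "0 < k" and "2 * k \<le> p"
  obtains Ys where "\<forall>Y\<in>set Ys. Y \<subseteq> V \<and> card Y \<le> p"
    and "k * length Ys \<le> degree E v"
    and "\<forall>e\<in>E. v \<in> e \<longrightarrow> (odd (inversion_count Ys e) \<longleftrightarrow> e \<in> F)"
proof -
  define S where "S = neighbours F v"
  have "v \<in> V"
    using degree_pos_imp_vertex[OF G] deg \<open>0 < k\<close> by simp
  have S_V: "S \<subseteq> V"
    unfolding S_def neighbours_def using \<open>F \<subseteq> E\<close> simple_graph_edge_subset[OF G] by blast
  then have "finite S"
    using G finite_subset unfolding simple_graph_def by blast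
  obtain Ts where Ts: "\<forall>T\<in>set Ts. T \<subseteq> S \<and> card T \<le> p - 1"
      "\<forall>u\<in>S. length (filter (\<lambda>T. u \<in> T) Ts) = 1" "length Ts * (p - 1) < card S + (p - 1)"
    using split_into_chunks[OF \<open>finite S\<close>, of "p - 1"] \<open>0 < k\<close> \<open>2 * k \<le> p\<close> by auto
  have "card (insert v T) \<le> p" if "T \<in> set Ts" for T
    using that Ts(1) \<open>0 < k\<close> \<open>2 * k \<le> p\<close> by (intro card_insert_le_m1) auto
  then have "\<forall>Y\<in>set (map (insert v) Ts). Y \<subseteq> V \<and> card Y \<le> p"
    using Ts(1) S_V \<open>v \<in> V\<close> by auto
  moreover have "k * length (map (insert v) Ts) \<le> degree E v"
    using chunk_count_le[OF Ts(3) card_neighbours_le_degree[OF G \<open>F \<subseteq> E\<close>, of v, folded S_def] deg]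
      \<open>2 * k \<le> p\<close> by (simp add: mult.commute)
  moreover have "odd (inversion_count (map (insert v) Ts) e) \<longleftrightarrow> e \<in> F" if "e \<in> E" "v \<in> e" for e
  proof -
    obtain u where u: "u \<noteq> v" "e = {v, u}"
      using simple_graph_edgeE[OF G \<open>e \<in> E\<close>] \<open>v \<in> e\<close> by (metis insert_commute insertE singletonD)
    have "inversion_count (map (insert v) Ts) e = (if u \<in> S then 1 else 0)"
      using u Ts(1,2) by (auto simp: inversion_count_insert_chunks filter_empty_conv)
    then show ?thesis
      using u unfolding S_def neighbours_def by simp
  qed
  ultimately show ?thesis
    using that by blast
qed

lemma inversion_parity_append:
  assumes Ys: "\<forall>e\<in>E. v \<in> e \<longrightarrow> (odd (inversion_count Ys e) \<longleftrightarrow> e \<in> F)"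
    and Zs: "\<forall>Z\<in>set Zs. v \<notin> Z"
    and Zs_parity: "\<forall>e\<in>E. v \<notin> e \<longrightarrow> (odd (inversion_count Zs e) \<longleftrightarrow> (e \<in> F) \<noteq> odd (inversion_count Ys e))"
  shows "\<forall>e\<in>E. odd (inversion_count (Ys @ Zs) e) \<longleftrightarrow> e \<in> F"
proof
  fix e assume "e \<in> E"
  show "odd (inversion_count (Ys @ Zs) e) \<longleftrightarrow> e \<in> F"
  proof (cases "v \<in> e")
    case True
    then have "inversion_count Zs e = 0"
      using Zs unfolding inversion_count_def by (auto simp: filter_empty_conv)
    then show ?thesis
      using Ys \<open>e \<in> E\<close> True by simp
  next
    case False
    then show ?thesis
      using Zs_parity \<open>e \<in> E\<close> by auto
  qed
qed

lemma parity_inversions_exist: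
  assumes "simple_graph V E" and "F \<subseteq> E" and "0 < k" and "2 * k \<le> p"
  shows "\<exists>Xs. (\<forall>X\<in>set Xs. X \<subseteq> V \<and> card X \<le> p) \<and>
    k * length Xs \<le> card E + 2 * k * (k - 1)\<^sup>2 \<and>
    (\<forall>e\<in>E. odd (inversion_count Xs e) \<longleftrightarrow> e \<in> F)"
  using assms(1,2)
proof (induction "card E" arbitrary: V E F rule: less_induct)
  case (less E V F)
  note G = \<open>simple_graph V E\<close>
  show ?case
  proof (cases "\<forall>x. degree E x < k")
    case True
    then obtain Xs where "\<forall>X\<in>set Xs. X \<subseteq> V \<and> card X \<le> p"
      "k * length Xs \<le> card F + 2 * k * (k - 1)\<^sup>2" "\<forall>e\<in>E. odd (inversion_count Xs e) \<longleftrightarrow> e \<in> F"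
      using low_degree_parity_inversions[OF G _ \<open>F \<subseteq> E\<close> \<open>2 * k \<le> p\<close>] by blast
    moreover have "card F \<le> card E"
      using \<open>F \<subseteq> E\<close> simple_graph_finite_edges[OF G] by (rule card_mono[rotated])
    ultimately show ?thesis
      by (intro exI[of _ Xs]) auto
  next
    case False
    then obtain v where deg: "k \<le> degree E v"
      by (auto simp: not_less)
    obtain Ys where Ys: "\<forall>Y\<in>set Ys. Y \<subseteq> V \<and> card Y \<le> p" "k * length Ys \<le> degree E v"
        "\<forall>e\<in>E. v \<in> e \<longrightarrow> (odd (inversion_count Ys e) \<longleftrightarrow> e \<in> F)"
      using star_parity_inversions[OF G \<open>F \<subseteq> E\<close> deg \<open>0 < k\<close> \<open>2 * k \<le> p\<close>] by blast
    define E' where "E' = {e \<in> E. v \<notin> e}"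
    \<comment> \<open>the edges of G - v that still have the wrong orientation after Ys\<close>
    define F' where "F' = {e \<in> E'. (e \<in> F) \<noteq> odd (inversion_count Ys e)}"
    have card_E: "card E = card E' + degree E v"
      unfolding E'_def using simple_graph_finite_edges[OF G] by (rule card_edges_eq_degree_add)
    then have "card E' < card E"
      using deg \<open>0 < k\<close> by simp
    then obtain Zs where Zs: "\<forall>Z\<in>set Zs. Z \<subseteq> V - {v} \<and> card Z \<le> p"
        "k * length Zs \<le> card E' + 2 * k * (k - 1)\<^sup>2"
        "\<forall>e\<in>E'. odd (inversion_count Zs e) \<longleftrightarrow> e \<in> F'"
      using less.hyps[of E' "V - {v}" F'] simple_graph_delete_vertex[OF G] unfolding E'_def F'_def by blast
    have "\<forall>e\<in>E. odd (inversion_count (Ys @ Zs) e) \<longleftrightarrow> e \<in> F"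
      using Zs(1,3) by (intro inversion_parity_append[OF Ys(3)]) (auto simp: E'_def F'_def)
    moreover have "k * length (Ys @ Zs) \<le> card E + 2 * k * (k - 1)\<^sup>2"
      using Ys(2) Zs(2) card_E by (simp add: add_mult_distrib2)
    ultimately show ?thesis
      using Ys(1) Zs(1) by (intro exI[of _ "Ys @ Zs"]) auto
  qed
qed

lemma inv_dist_le_card_edges_div:
  assumes G: "simple_graph V E" and "0 < k" "2 * k \<le> p"
    and A1: "orientation V E A1" and A2: "orientation V E A2"
  shows "inv_dist V p A1 A2 \<le> card E div k + 2 * (k - 1)\<^sup>2"
proof -
  obtain Xs where Xs: "\<forall>X\<in>set Xs. X \<subseteq> V \<and> card X \<le> p"
      "k * length Xs \<le> card E + 2 * k * (k - 1)\<^sup>2"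
      "\<forall>e\<in>E. odd (inversion_count Xs e) \<longleftrightarrow> e \<in> disagreement A1 A2"
    using parity_inversions_exist[OF G disagreement_subset[OF A1] \<open>0 < k\<close> \<open>2 * k \<le> p\<close>] by blast
  have "inv_dist V p A1 A2 \<le> length Xs"
    using Xs(1) apply_inversions_eq_if_parity[OF A1 A2 Xs(3)] by (rule inv_dist_le_length)
  also have "\<dots> \<le> (card E + 2 * (k - 1)\<^sup>2 * k) div k"
    using Xs(2) \<open>0 < k\<close> by (subst less_eq_div_iff_mult_less_eq) (simp_all add: ac_simps)
  also have "\<dots> = card E div k + 2 * (k - 1)\<^sup>2"
    using \<open>0 < k\<close> by simp
  finally show ?thesis .
qed

lemma two_mul_pred_sq_le_half_sq:
  assumes "2 * k \<le> p"
  shows "real (2 * (k - 1)\<^sup>2) \<le> (real p)\<^sup>2 / 2"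
proof -
  have "(2 * (k - 1))\<^sup>2 \<le> p\<^sup>2"
    using assms by (intro power_mono) auto
  then have "4 * (k - 1)\<^sup>2 \<le> p\<^sup>2"
    by (simp add: power_mult_distrib)
  then have "real (4 * (k - 1)\<^sup>2) \<le> real (p\<^sup>2)"
    by (rule of_nat_mono)
  then show ?thesis
    by simp
qed

theorem theorem1p2:
  fixes V :: "'a set" and E :: "'a set set" and p :: nat
  assumes "simple_graph V E" and "p \<ge> 2"
  shows "real (inv_diam V E p)
           \<le> real_of_int \<lceil>real (card E) / real (p div 2)\<rceil> + (real p)\<^sup>2 / 2"
proof -
  define k where "k = p div 2"
  have "0 < k" "2 * k \<le> p"
    using \<open>p \<ge> 2\<close> unfolding k_def by auto
  have "inv_diam V E p \<le> card E div k + 2 * (k - 1)\<^sup>2"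
    using inv_dist_le_card_edges_div[OF assms(1) \<open>0 < k\<close> \<open>2 * k \<le> p\<close>] by (rule inv_diam_le)
  then have "real (inv_diam V E p) \<le> real (card E div k) + real (2 * (k - 1)\<^sup>2)"
    by (simp only: of_nat_add[symmetric] of_nat_le_iff)
  moreover have "real (card E div k) \<le> real_of_int \<lceil>real (card E) / real (p div 2)\<rceil>"
    unfolding k_def using of_nat_div_le_of_nat le_of_int_ceiling order_trans by blast
  moreover have "real (2 * (k - 1)\<^sup>2) \<le> (real p)\<^sup>2 / 2"
    using \<open>2 * k \<le> p\<close> by (rule two_mul_pred_sq_le_half_sq)
  ultimately show ?thesis
    by linarith
qed

end
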